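(* Let $(V,\le,\preccurlyeq)$ be a mixed lattice vector space equipped with a vector topology $\tau$. The following are equivalent: (a) $(x,y)\mapsto x\curlyvee y$ from $V\times V$ to $V$ is uniformly continuous; (b) $(x,y)\mapsto x\curlywedge y$ from $V\times V$ to $V$ is uniformly continuous; (c) $x\mapsto {}^ux$ is uniformly continuous; (d) $x\mapsto {}^lx$ is uniformly continuous; (e) $x\mapsto |x|_{lu}$ is uniformly continuous; (f) $x\mapsto |x|_{ul}$ is uniformly continuous; (g) $x\mapsto x^l$ is uniformly continuous; (h) $x\mapsto x^u$ is uniformly continuous.
   Context: A mixed lattice vector space $(V,\le,\preccurlyeq)$ is a real vector space $V$ with two partial orderings $\le$ (initial order) and $\preccurlyeq$ (specific order), each making $V$ a partially ordered vector space, with positive cones $V_p=\{x:0\le x\}$, $V_{sp}=\{x:0\preccurlyeq x\}$, such that: (1) for all $x,y$ the elements $x\curlyvee y=\min\{w: w\succcurlyeq x,\ w\ge y\}$ and $x\curlywedge y=\max\{w: w\preccurlyeq x,\ w\le y\}$ exist (min/max with respect to $\le$); (2) $x\preccurlyeq y$ implies $x\le y$; (3) $x\curlyvee y, x\curlywedge y\in V_{sp}$ whenever $x,y\in V_{sp}$. Notation: $x^u=0\curlyvee x$, $x^l=0\curlyvee(-x)$, ${}^ux=x\curlyvee 0$, ${}^lx=(-x)\curlyvee 0$, $|x|_{ul}=x\curlyvee(-x)$, $|x|_{lu}=(-x)\curlyvee x$. A map $f:V\to V$ is uniformly continuous if for every neighborhood $W$ of $0$ there is a neighborhood $U$ of $0$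 with $x-y\in U\Rightarrow f(x)-f(y)\in W$; a map $g:V\times V\to V$ is uniformly continuous if for every neighborhood $W$ of $0$ there is a neighborhood $U$ of $0$ such that $x-x'\in U$ and $y-y'\in U$ imply $g(x,y)-g(x',y')\in W$. *)

theory Defs
  imports "HOL-Analysis.Analysis"
begin

definition po_vector_space :: "('a::real_vector \<Rightarrow> 'a \<Rightarrow> bool) \<Rightarrow> bool" where
  "po_vector_space le \<longleftrightarrow>
     (\<forall>x. le x x) \<and>
     (\<forall>x y. le x y \<and> le y x \<longrightarrow> x = y) \<and>
     (\<forall>x y z. le x y \<and> le y z \<longrightarrow> le x z) \<and>
     (\<forall>x y z. le x y \<longrightarrow> le (x + z) (y + z)) \<and>
     (\<forall>x y (c::real). le x y \<and> 0 \<le> c \<longrightarrow> le (c *\<^sub>R x) (c *\<^sub>R y))"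

definition msup :: "('a \<Rightarrow> 'a \<Rightarrow> bool) \<Rightarrow> ('a \<Rightarrow> 'a \<Rightarrow> bool) \<Rightarrow> 'a \<Rightarrow> 'a \<Rightarrow> 'a" where
  "msup le sle x y = (THE w. sle x w \<and> le y w \<and> (\<forall>v. sle x v \<and> le y v \<longrightarrow> le w v))"

definition minf :: "('a \<Rightarrow> 'a \<Rightarrow> bool) \<Rightarrow> ('a \<Rightarrow> 'a \<Rightarrow> bool) \<Rightarrow> 'a \<Rightarrow> 'a \<Rightarrow> 'a" where
  "minf le sle x y = (THE w. sle w x \<and> le w y \<and> (\<forall>v. sle v x \<and> le v y \<longrightarrow> le v w))"

definition mixed_lattice_vector_space ::
  "('a::real_vector \<Rightarrow> 'a \<Rightarrow> bool) \<Rightarrow> ('a \<Rightarrow> 'a \<Rightarrow> bool) \<Rightarrow> bool" where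
  "mixed_lattice_vector_space le sle \<longleftrightarrow>
     po_vector_space le \<and> po_vector_space sle \<and>
     (\<forall>x y. \<exists>w. sle x w \<and> le y w \<and> (\<forall>v. sle x v \<and> le y v \<longrightarrow> le w v)) \<and>
     (\<forall>x y. \<exists>w. sle w x \<and> le w y \<and> (\<forall>v. sle v x \<and> le v y \<longrightarrow> le v w)) \<and>
     (\<forall>x y. sle x y \<longrightarrow> le x y) \<and>
     (\<forall>x y. sle 0 x \<and> sle 0 y \<longrightarrow> sle 0 (msup le sle x y) \<and> sle 0 (minf le sle x y))"

definition vector_topology :: "'a::real_vector topology \<Rightarrow> bool" where
  "vector_topology T \<longleftrightarrow>
     topspace T = UNIV \<and>
     continuous_map (prod_topology T T) T (\<lambda>(x, y). x + y) \<and>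
     continuous_map (prod_topology euclideanreal T) T (\<lambda>(c, x). c *\<^sub>R x)"

definition nhd0 :: "'a::real_vector topology \<Rightarrow> 'a set \<Rightarrow> bool" where
  "nhd0 T W \<longleftrightarrow> (\<exists>U. openin T U \<and> 0 \<in> U \<and> U \<subseteq> W)"

definition unif_cont1 :: "'a::real_vector topology \<Rightarrow> ('a \<Rightarrow> 'a) \<Rightarrow> bool" where
  "unif_cont1 T f \<longleftrightarrow>
     (\<forall>W. nhd0 T W \<longrightarrow> (\<exists>U. nhd0 T U \<and> (\<forall>x y. x - y \<in> U \<longrightarrow> f x - f y \<in> W)))"

definition unif_cont2 :: "'a::real_vector topology \<Rightarrow> ('a \<Rightarrow> 'a \<Rightarrow> 'a) \<Rightarrow> bool" where
  "unif_cont2 T g \<longleftrightarrow>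
     (\<forall>W. nhd0 T W \<longrightarrow> (\<exists>U. nhd0 T U \<and>
        (\<forall>x y x' y'. x - x' \<in> U \<and> y - y' \<in> U \<longrightarrow> g x y - g x' y' \<in> W)))"

end

theory Submission
  imports Defs
begin

text \<open>Translation invariance gives \<open>x \<curlyvee> y = (x - y) \<curlyvee> 0 + y\<close>, and
  \<open>x \<curlywedge> y = -((-x) \<curlyvee> (-y))\<close>. Hence the mixed supremum, the mixed infimum and each of
  the six one-variable maps is obtained from \<open>x \<mapsto> x \<curlyvee> 0\<close> by an invertible affine change
  of variables, and in a vector topology such changes preserve uniform continuity.\<close>

lemma po_vector_space_antisym: "po_vector_space le \<Longrightarrow> le x y \<Longrightarrow> le y x \<Longrightarrow> x = y"
  unfolding po_vector_space_def by blast

lemma po_vector_space_add_right: "po_vector_space le \<Longrightarrow> le x y \<Longrightarrow> le (x + z) (y + z)"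
  unfolding po_vector_space_def by blast

lemma po_vector_space_add_right_iff: "po_vector_space le \<Longrightarrow> le (x + z) (y + z) \<longleftrightarrow> le x y"
  using po_vector_space_add_right[of le x y z] po_vector_space_add_right[of le "x + z" "y + z" "- z"]
  by auto

lemma po_vector_space_uminus: "po_vector_space le \<Longrightarrow> le x y \<Longrightarrow> le (- y) (- x)"
  using po_vector_space_add_right[of le x y "- x - y"] by (simp add: algebra_simps)

lemma msup_eqI:
  assumes M: "mixed_lattice_vector_space le sle"
    and w: "sle x w" "le y w" "\<And>v. sle x v \<Longrightarrow> le y v \<Longrightarrow> le w v"
  shows "msup le sle x y = w"
proof -
  have "po_vector_space le" using M by (simp add: mixed_lattice_vector_space_def)
  then show ?thesis
    unfolding msup_def using w by (blast intro: the_equality po_vector_space_antisym)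
qed

lemma msup_lub:
  assumes M: "mixed_lattice_vector_space le sle"
  shows "sle x (msup le sle x y)" "le y (msup le sle x y)"
    and "sle x v \<Longrightarrow> le y v \<Longrightarrow> le (msup le sle x y) v"
proof -
  obtain w where w: "sle x w \<and> le y w \<and> (\<forall>v. sle x v \<and> le y v \<longrightarrow> le w v)"
    using M unfolding mixed_lattice_vector_space_def by blast
  then have "msup le sle x y = w" by (intro msup_eqI[OF M]) auto
  with w show "sle x (msup le sle x y)" "le y (msup le sle x y)"
    and "sle x v \<Longrightarrow> le y v \<Longrightarrow> le (msup le sle x y) v" by simp_all
qed

lemma msup_add:
  assumes M: "mixed_lattice_vector_space le sle"
  shows "msup le sle (x + z) (y + z) = msup le sle x y + z"
proof (rule msup_eqI[OF M])
  have po: "po_vector_space le" "po_vector_space sle"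
    using M by (simp_all add: mixed_lattice_vector_space_def)
  show "sle (x + z) (msup le sle x y + z)" "le (y + z) (msup le sle x y + z)"
    using msup_lub[OF M] po by (simp_all add: po_vector_space_add_right_iff)
  fix v assume "sle (x + z) v" "le (y + z) v"
  then have "sle x (v - z)" "le y (v - z)"
    using po po_vector_space_add_right_iff[of _ _ z "v - z"] by auto
  then have "le (msup le sle x y) (v - z)" by (rule msup_lub(3)[OF M])
  then show "le (msup le sle x y + z) v"
    using po po_vector_space_add_right_iff[of le _ z "v - z"] by simp
qed

lemma msup_eq_msup_diff_zero:
  "mixed_lattice_vector_space le sle \<Longrightarrow> msup le sle x y = msup le sle (x - y) 0 + y"
  using msup_add[of le sle "x - y" y 0] by simp

lemma minf_eq_uminus_msup:
  assumes M: "mixed_lattice_vector_space le sle"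
  shows "minf le sle x y = - msup le sle (- x) (- y)"
proof -
  have po: "po_vector_space le" "po_vector_space sle"
    using M by (simp_all add: mixed_lattice_vector_space_def)
  let ?w = "- msup le sle (- x) (- y)"
  have "sle ?w x" "le ?w y"
    using po_vector_space_uminus[OF po(2) msup_lub(1)[OF M, where x="- x" and y="- y"]]
      po_vector_space_uminus[OF po(1) msup_lub(2)[OF M, where x="- x" and y="- y"]] by simp_all
  moreover have "le v ?w" if "sle v x" "le v y" for v
  proof -
    have "le (msup le sle (- x) (- y)) (- v)"
      using that po po_vector_space_uminus by (blast intro: msup_lub(3)[OF M])
    then show ?thesis using po po_vector_space_uminus by fastforce
  qed
  ultimately show ?thesis
    unfolding minf_def using po by (blast intro: the_equality po_vector_space_antisym)
qed

lemma nhd0_Int: "nhd0 T A \<Longrightarrow> nhd0 T B \<Longrightarrow> nhd0 T (A \<inter> B)"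
  unfolding nhd0_def by (metis Int_mono Int_iff openin_Int)

lemma vector_topology_continuous_map_scaleR:
  assumes "vector_topology T"
  shows "continuous_map T T (\<lambda>x. c *\<^sub>R x)"
proof -
  have "continuous_map T (prod_topology euclideanreal T) (\<lambda>x. (c, x))"
    by (simp add: continuous_map_paired)
  moreover have "continuous_map (prod_topology euclideanreal T) T (\<lambda>(c, x). c *\<^sub>R x)"
    using assms by (simp add: vector_topology_def)
  ultimately have "continuous_map T T ((\<lambda>(c, x). c *\<^sub>R x) \<circ> (\<lambda>x. (c, x)))"
    by (rule continuous_map_compose)
  then show ?thesis by (simp add: o_def)
qed

lemma nhd0_scaleR_preimage:
  assumes VT: "vector_topology T" and W: "nhd0 T W"
  shows "nhd0 T {x. c *\<^sub>R x \<in> W}"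
proof -
  obtain U where U: "openin T U" "0 \<in> U" "U \<subseteq> W" using W by (auto simp: nhd0_def)
  have "openin T {x \<in> topspace T. c *\<^sub>R x \<in> U}"
    using vector_topology_continuous_map_scaleR[OF VT] U(1) by (rule openin_continuous_map_preimage)
  then have "openin T {x. c *\<^sub>R x \<in> U}"
    using VT by (simp add: vector_topology_def)
  with U show ?thesis unfolding nhd0_def by auto
qed

lemma nhd0_half:
  assumes VT: "vector_topology T" and W: "nhd0 T W"
  obtains V where "nhd0 T V" "\<And>a b. a \<in> V \<Longrightarrow> b \<in> V \<Longrightarrow> a + b \<in> W \<and> a - b \<in> W"
proof -
  obtain U where U: "openin T U" "0 \<in> U" "U \<subseteq> W" using W by (auto simp: nhd0_def)
  have "continuous_map (prod_topology T T) T (\<lambda>(x, y). x + y)"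
    using VT by (simp add: vector_topology_def)
  then have "openin (prod_topology T T)
      {p \<in> topspace (prod_topology T T). (\<lambda>(x, y). x + y) p \<in> U}"
    using U(1) by (rule openin_continuous_map_preimage)
  then have sum_open: "openin (prod_topology T T) {p. fst p + snd p \<in> U}"
    using VT by (simp add: vector_topology_def case_prod_beta)
  have "(0, 0) \<in> {p. fst p + snd p \<in> U}" using U by simp
  then obtain A B where AB: "openin T A" "openin T B" "0 \<in> A" "0 \<in> B"
    "A \<times> B \<subseteq> {p. fst p + snd p \<in> U}"
    using sum_open[unfolded openin_prod_topology_alt] by meson
  have AB0: "nhd0 T (A \<inter> B)" unfolding nhd0_def using AB by blast
  have "nhd0 T (A \<inter> B \<inter> {x. (-1) *\<^sub>R x \<in> A \<inter> B})"
    by (rule nhd0_Int[OF AB0 nhd0_scaleR_preimage[OF VT AB0]])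
  moreover have "a + b \<in> W \<and> a - b \<in> W"
    if "a \<in> A \<inter> B \<inter> {x. (-1) *\<^sub>R x \<in> A \<inter> B}" "b \<in> A \<inter> B \<inter> {x. (-1) *\<^sub>R x \<in> A \<inter> B}" for a b
  proof -
    have "(a, b) \<in> A \<times> B" "(a, - b) \<in> A \<times> B" using that by auto
    then have "a + b \<in> U" "a + - b \<in> U" using AB(5) by auto
    then show ?thesis using U(3) by auto
  qed
  ultimately show ?thesis by (rule that)
qed

lemma unif_cont1_affine:
  assumes VT: "vector_topology T" and g: "unif_cont1 T g"
  shows "unif_cont1 T (\<lambda>x. a *\<^sub>R g (c *\<^sub>R x) + d *\<^sub>R x)"
  unfolding unif_cont1_def
proof (intro allI impI)
  fix W assume "nhd0 T W"
  then obtain V where V: "nhd0 T V" "\<And>a b. a \<in> V \<Longrightarrow> b \<in> V \<Longrightarrow> a + b \<in> W"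
    using nhd0_half[OF VT] by metis
  obtain U where U: "nhd0 T U" "\<And>x y. x - y \<in> U \<Longrightarrow> a *\<^sub>R (g x - g y) \<in> V"
    using g nhd0_scaleR_preimage[OF VT V(1), of a] unfolding unif_cont1_def by auto
  have "nhd0 T ({z. c *\<^sub>R z \<in> U} \<inter> {z. d *\<^sub>R z \<in> V})"
    by (intro nhd0_Int nhd0_scaleR_preimage VT U(1) V(1))
  moreover have "(a *\<^sub>R g (c *\<^sub>R x) + d *\<^sub>R x) - (a *\<^sub>R g (c *\<^sub>R y) + d *\<^sub>R y) \<in> W"
    if "x - y \<in> {z. c *\<^sub>R z \<in> U} \<inter> {z. d *\<^sub>R z \<in> V}" for x y
  proof -
    have "a *\<^sub>R (g (c *\<^sub>R x) - g (c *\<^sub>R y)) \<in> V" "d *\<^sub>R x - d *\<^sub>R y \<in> V"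
      using that U(2) by (auto simp: scaleR_diff_right)
    then have "a *\<^sub>R (g (c *\<^sub>R x) - g (c *\<^sub>R y)) + (d *\<^sub>R x - d *\<^sub>R y) \<in> W" by (rule V(2))
    moreover have "(a *\<^sub>R g (c *\<^sub>R x) + d *\<^sub>R x) - (a *\<^sub>R g (c *\<^sub>R y) + d *\<^sub>R y)
        = a *\<^sub>R (g (c *\<^sub>R x) - g (c *\<^sub>R y)) + (d *\<^sub>R x - d *\<^sub>R y)"
      by (simp add: algebra_simps)
    ultimately show ?thesis by (simp only:)
  qed
  ultimately show "\<exists>U. nhd0 T U \<and> (\<forall>x y. x - y \<in> U \<longrightarrow>
      (a *\<^sub>R g (c *\<^sub>R x) + d *\<^sub>R x) - (a *\<^sub>R g (c *\<^sub>R y) + d *\<^sub>R y) \<in> W)" by blast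
qed

lemma unif_cont1_affine_iff:
  assumes VT: "vector_topology T" and "a \<noteq> 0" "c \<noteq> 0"
    and f: "\<And>x. f x = a *\<^sub>R g (c *\<^sub>R x) + d *\<^sub>R x"
  shows "unif_cont1 T f \<longleftrightarrow> unif_cont1 T g"
proof
  assume "unif_cont1 T f"
  then have "unif_cont1 T (\<lambda>y. (1 / a) *\<^sub>R f ((1 / c) *\<^sub>R y) + (- d / (a * c)) *\<^sub>R y)"
    by (rule unif_cont1_affine[OF VT])
  moreover have "(1 / a) *\<^sub>R f ((1 / c) *\<^sub>R y) + (- d / (a * c)) *\<^sub>R y = g y" for y
    using \<open>a \<noteq> 0\<close> \<open>c \<noteq> 0\<close> by (simp add: f scaleR_add_right)
  ultimately show "unif_cont1 T g" by simp
next
  assume "unif_cont1 T g"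
  then show "unif_cont1 T f" unfolding f[abs_def] by (rule unif_cont1_affine[OF VT])
qed

lemma unif_cont2_iff_unif_cont1:
  assumes VT: "vector_topology T" and g: "\<And>x y. g x y = f (x - y) + y"
  shows "unif_cont2 T g \<longleftrightarrow> unif_cont1 T f"
proof
  assume g2: "unif_cont2 T g"
  show "unif_cont1 T f" unfolding unif_cont1_def
  proof (intro allI impI)
    fix W assume "nhd0 T W"
    then obtain U where U: "nhd0 T U"
      "\<And>x y x' y'. x - x' \<in> U \<Longrightarrow> y - y' \<in> U \<Longrightarrow> g x y - g x' y' \<in> W"
      using g2 unfolding unif_cont2_def by blast
    have "0 \<in> U" using U(1) by (auto simp: nhd0_def)
    then have "f x - f y \<in> W" if "x - y \<in> U" for x y
      using U(2)[OF that, of 0 0] by (simp add: g)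
    with U(1) show "\<exists>U. nhd0 T U \<and> (\<forall>x y. x - y \<in> U \<longrightarrow> f x - f y \<in> W)" by blast
  qed
next
  assume f: "unif_cont1 T f"
  show "unif_cont2 T g" unfolding unif_cont2_def
  proof (intro allI impI)
    fix W assume "nhd0 T W"
    then obtain V where V: "nhd0 T V" "\<And>a b. a \<in> V \<Longrightarrow> b \<in> V \<Longrightarrow> a + b \<in> W"
      using nhd0_half[OF VT] by metis
    obtain U where U: "nhd0 T U" "\<And>x y. x - y \<in> U \<Longrightarrow> f x - f y \<in> V"
      using f V(1) unfolding unif_cont1_def by blast
    obtain U' where U': "nhd0 T U'" "\<And>a b. a \<in> U' \<Longrightarrow> b \<in> U' \<Longrightarrow> a - b \<in> U"
      using nhd0_half[OF VT U(1)] by metis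
    have "g x y - g x' y' \<in> W" if "x - x' \<in> U' \<inter> V" "y - y' \<in> U' \<inter> V" for x y x' y'
    proof -
      have "(x - y) - (x' - y') = (x - x') - (y - y')" by (simp add: algebra_simps)
      moreover have "(x - x') - (y - y') \<in> U" using that U'(2) by blast
      ultimately have "f (x - y) - f (x' - y') \<in> V" by (metis U(2))
      moreover have "g x y - g x' y' = (f (x - y) - f (x' - y')) + (y - y')"
        by (simp add: g algebra_simps)
      ultimately show ?thesis using V(2) that by simp
    qed
    moreover have "nhd0 T (U' \<inter> V)" by (rule nhd0_Int[OF U'(1) V(1)])
    ultimately show "\<exists>U. nhd0 T U \<and>
        (\<forall>x y x' y'. x - x' \<in> U \<and> y - y' \<in> U \<longrightarrow> g x y - g x' y' \<in> W)" by blast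
  qed
qed

theorem proposition3p3:
  fixes le sle :: "'a::real_vector \<Rightarrow> 'a \<Rightarrow> bool" and T :: "'a topology"
  assumes "mixed_lattice_vector_space le sle"
    and "vector_topology T"
  defines "sup' \<equiv> msup le sle" and "inf' \<equiv> minf le sle"
  shows
   "(unif_cont2 T sup' \<longleftrightarrow> unif_cont2 T inf') \<and>
    (unif_cont2 T inf' \<longleftrightarrow> unif_cont1 T (\<lambda>x. sup' x 0)) \<and>
    (unif_cont1 T (\<lambda>x. sup' x 0) \<longleftrightarrow> unif_cont1 T (\<lambda>x. sup' (- x) 0)) \<and>
    (unif_cont1 T (\<lambda>x. sup' (- x) 0) \<longleftrightarrow> unif_cont1 T (\<lambda>x. sup' (- x) x)) \<and>
    (unif_cont1 T (\<lambda>x. sup' (- x) x) \<longleftrightarrow> unif_cont1 T (\<lambda>x. sup' x (- x))) \<and>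
    (unif_cont1 T (\<lambda>x. sup' x (- x)) \<longleftrightarrow> unif_cont1 T (\<lambda>x. sup' 0 (- x))) \<and>
    (unif_cont1 T (\<lambda>x. sup' 0 (- x)) \<longleftrightarrow> unif_cont1 T (\<lambda>x. sup' 0 x))"
proof -
  note M = assms(1) and VT = assms(2)
  define u where "u = (\<lambda>x. sup' x 0)"
  have shift: "sup' x y = u (x - y) + y" for x y
    unfolding u_def sup'_def by (rule msup_eq_msup_diff_zero[OF M])
  have affine_iff_u: "unif_cont1 T f \<longleftrightarrow> unif_cont1 T u"
    if "\<And>x. f x = a *\<^sub>R u (c *\<^sub>R x) + d *\<^sub>R x" "a \<noteq> 0" "c \<noteq> 0" for f a c d
    using unif_cont1_affine_iff[OF VT that(2,3) that(1)] .
  have "unif_cont2 T sup' \<longleftrightarrow> unif_cont1 T u"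
    by (rule unif_cont2_iff_unif_cont1[OF VT shift])
  moreover have "unif_cont2 T inf' \<longleftrightarrow> unif_cont1 T (\<lambda>z. - u (- z))"
    by (rule unif_cont2_iff_unif_cont1[OF VT])
      (simp add: inf'_def minf_eq_uminus_msup[OF M] shift flip: sup'_def)
  moreover have "unif_cont1 T (\<lambda>z. - u (- z)) \<longleftrightarrow> unif_cont1 T u"
    by (rule affine_iff_u[of _ "-1" "-1" 0]) simp_all
  moreover have "unif_cont1 T (\<lambda>x. sup' (- x) 0) \<longleftrightarrow> unif_cont1 T u"
    by (rule affine_iff_u[of _ 1 "-1" 0]) (simp_all add: u_def)
  moreover have "unif_cont1 T (\<lambda>x. sup' (- x) x) \<longleftrightarrow> unif_cont1 T u"
    by (rule affine_iff_u[of _ 1 "-2" 1]) (simp_all add: shift scaleR_2 flip: diff_conv_add_uminus)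
  moreover have "unif_cont1 T (\<lambda>x. sup' x (- x)) \<longleftrightarrow> unif_cont1 T u"
    by (rule affine_iff_u[of _ 1 2 "-1"]) (simp_all add: shift scaleR_2)
  moreover have "unif_cont1 T (\<lambda>x. sup' 0 (- x)) \<longleftrightarrow> unif_cont1 T u"
    by (rule affine_iff_u[of _ 1 1 "-1"]) (simp_all add: shift)
  moreover have "unif_cont1 T (\<lambda>x. sup' 0 x) \<longleftrightarrow> unif_cont1 T u"
    by (rule affine_iff_u[of _ 1 "-1" 1]) (simp_all add: shift)
  ultimately show ?thesis unfolding u_def by simp
qed

end
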